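(* Let $\Omega = \bigcap_{j=1}^n \{x \in \mathbb{R}^d : a_j^{\intercal} x \leq b_j\}$ be a convex polytope of unit diameter containing the origin in its interior, where each $a_j$ is a unit vector and $b_j > 0$. Let $\varepsilon > 0$ and define the lifted body and the expanded body in $\mathbb{R}^{d+1}$ $$\widehat{\Omega} = \{(x;z) : z \geq 0,\ z \leq b_j - a_j^{\intercal}x \ \forall j\},\qquad \widehat{\Omega}^+ = \{(x;z) : z \leq b_j - a_j^{\intercal}x + \varepsilon \ \forall j\}.$$ Let $0 < \lambda_c < 1$. Then there is a constant $c > 0$ depending only on $\lambda_c$ and $d$ such that for every point $p \in \widehat{\Omega}$, the Macbeath ellipsoid $E^{\lambda_c}_{\widehat{\Omega}^+}(p)$ contains the Euclidean ball of radius $c\,\varepsilon$ centered at $p$.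
   Context: For a convex set $K$, a point $p \in K$ and $\lambda > 0$, the $\lambda$-scaled Macbeath region is $M^{\lambda}_K(p) = p + \lambda\big((K - p) \cap (p - K)\big)$, and the Macbeath ellipsoid $E^{\lambda}_K(p)$ is the maximum-volume ellipsoid contained in $M^{\lambda}_K(p)$ (it is centered at $p$). In the paper's data structure these ellipsoids (with centers in $\widehat{\Omega}$) are the covering ellipsoids. *)

theory Defs
  imports "HOL-Analysis.Analysis"
begin

definition is_ellipsoid :: "'a::euclidean_space set \<Rightarrow> bool" where
  "is_ellipsoid E \<longleftrightarrow>
     (\<exists>c (f :: 'a \<Rightarrow> 'a). linear f \<and> inj f \<and> E = (\<lambda>v. c + f v) ` cball 0 1)"

definition macbeath_region :: "real \<Rightarrow> 'a::euclidean_space set \<Rightarrow> 'a \<Rightarrow> 'a set" where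
  "macbeath_region lam K p =
     (\<lambda>v. p + lam *\<^sub>R v) ` ({v. p + v \<in> K} \<inter> {v. p - v \<in> K})"

definition max_vol_ellipsoid_in :: "'a::euclidean_space set \<Rightarrow> 'a set \<Rightarrow> bool" where
  "max_vol_ellipsoid_in E M \<longleftrightarrow>
     is_ellipsoid E \<and> E \<subseteq> M \<and>
     (\<forall>E'. is_ellipsoid E' \<and> E' \<subseteq> M \<longrightarrow> measure lebesgue E' \<le> measure lebesgue E)"

definition is_macbeath_ellipsoid :: "real \<Rightarrow> 'a::euclidean_space set \<Rightarrow> 'a \<Rightarrow> 'a set \<Rightarrow> bool" where
  "is_macbeath_ellipsoid lam K p E \<longleftrightarrow> max_vol_ellipsoid_in E (macbeath_region lam K p)"

end

(*
  The Macbeath region of the expanded body at a point p of the lifted body is convex, symmetric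
  about p, and contains the ball of radius lam_c * eps / 2 about p, because moving a point of the
  lifted body by at most eps / 2 keeps it in the expanded body.  For any such body M (of dimension N)
  a maximum-volume ellipsoid E is centred at p and contains M shrunk by the factor 4^(N+1) about p:
  otherwise the convex hull of E with a reflected copy of E, or with a far pair p +- f x, contains an
  ellipsoid stretched along one axis whose volume exceeds that of E.  With N = d + 1 this gives
  c = lam_c / (2 * 4^(d+2)).
*)
theory Submission
  imports Defs
begin

lemma power2_norm_eq_orthogonal_part:
  fixes e y :: "'a::real_inner"
  assumes "norm e = 1"
  shows "(norm y)\<^sup>2 = (norm (y - (y \<bullet> e) *\<^sub>R e))\<^sup>2 + (y \<bullet> e)\<^sup>2"
proof -
  have "e \<bullet> e = 1" using assms by (simp add: norm_eq_1)
  then have "orthogonal (y - (y \<bullet> e) *\<^sub>R e) ((y \<bullet> e) *\<^sub>R e)"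
    by (simp add: orthogonal_def inner_diff_left)
  from norm_add_Pythagorean[OF this] show ?thesis
    using assms by simp
qed

definition axis_scale :: "'a::real_inner \<Rightarrow> real \<Rightarrow> real \<Rightarrow> 'a \<Rightarrow> 'a" where
  "axis_scale e \<alpha> \<beta> y = \<alpha> *\<^sub>R (y - (y \<bullet> e) *\<^sub>R e) + (\<beta> * (y \<bullet> e)) *\<^sub>R e"

lemma linear_axis_scale: "linear (axis_scale e \<alpha> \<beta>)"
  by (auto simp: linear_iff axis_scale_def algebra_simps)

context
  fixes e :: "'a::real_inner"
  assumes e: "norm e = 1"
begin

lemma inner_axis_scale: "axis_scale e \<alpha> \<beta> y \<bullet> e = \<beta> * (y \<bullet> e)"
proof -
  have "e \<bullet> e = 1" using e by (simp add: norm_eq_1)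
  then show ?thesis by (simp add: axis_scale_def inner_add_left inner_diff_left)
qed

lemma axis_scale_orthogonal_part:
  "axis_scale e \<alpha> \<beta> y - (axis_scale e \<alpha> \<beta> y \<bullet> e) *\<^sub>R e = \<alpha> *\<^sub>R (y - (y \<bullet> e) *\<^sub>R e)"
  unfolding inner_axis_scale by (simp add: axis_scale_def)

lemma axis_scale_axis_scale:
  "axis_scale e \<alpha> \<beta> (axis_scale e \<alpha>' \<beta>' y) = axis_scale e (\<alpha> * \<alpha>') (\<beta> * \<beta>') y"
  unfolding axis_scale_def[of e \<alpha> \<beta>] inner_axis_scale axis_scale_orthogonal_part
  by (simp add: axis_scale_def algebra_simps)

lemma axis_scale_1_1: "axis_scale e 1 1 y = y"
  by (simp add: axis_scale_def)

lemma inj_axis_scale: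
  assumes "\<alpha> \<noteq> 0" "\<beta> \<noteq> 0"
  shows "inj (axis_scale e \<alpha> \<beta>)"
  by (rule inj_on_inverseI[of _ "axis_scale e (1/\<alpha>) (1/\<beta>)"])
    (use assms in \<open>simp add: axis_scale_axis_scale axis_scale_1_1\<close>)

lemma mem_axis_scale_cball:
  assumes "\<alpha> > 0" "\<beta> > 0"
  shows "w \<in> axis_scale e \<alpha> \<beta> ` cball 0 1 \<longleftrightarrow>
           (norm (w - (w \<bullet> e) *\<^sub>R e) / \<alpha>)\<^sup>2 + ((w \<bullet> e) / \<beta>)\<^sup>2 \<le> 1"
proof -
  define y where "y = axis_scale e (1/\<alpha>) (1/\<beta>) w"
  have "w = axis_scale e \<alpha> \<beta> y"
    using assms by (simp add: y_def axis_scale_axis_scale axis_scale_1_1)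
  then have "w \<in> axis_scale e \<alpha> \<beta> ` cball 0 1 \<longleftrightarrow> (norm y)\<^sup>2 \<le> 1"
    using assms by (simp add: inj_image_mem_iff inj_axis_scale power_le_one_iff)
  moreover have "y - (y \<bullet> e) *\<^sub>R e = (1/\<alpha>) *\<^sub>R (w - (w \<bullet> e) *\<^sub>R e)"
    unfolding y_def by (rule axis_scale_orthogonal_part)
  moreover have "y \<bullet> e = (w \<bullet> e) / \<beta>"
    by (simp add: y_def inner_axis_scale)
  ultimately show ?thesis
    using assms power2_norm_eq_orthogonal_part[OF e, of y] by (simp add: power_divide)
qed

lemma cball_on_axis_bounds:
  assumes "w \<in> cball (t *\<^sub>R e) r"
  shows "norm (w - (w \<bullet> e) *\<^sub>R e) \<le> r" "\<bar>w \<bullet> e - t\<bar> \<le> r"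
proof -
  define d where "d = w - t *\<^sub>R e"
  have "e \<bullet> e = 1" using e by (simp add: norm_eq_1)
  then have "d \<bullet> e = w \<bullet> e - t" "d - (d \<bullet> e) *\<^sub>R e = w - (w \<bullet> e) *\<^sub>R e"
    by (simp_all add: d_def algebra_simps)
  moreover have "norm d \<le> r"
    using assms by (simp add: d_def dist_norm norm_minus_commute)
  moreover have "(norm (d - (d \<bullet> e) *\<^sub>R e))\<^sup>2 \<le> (norm d)\<^sup>2" "(d \<bullet> e)\<^sup>2 \<le> (norm d)\<^sup>2"
    using power2_norm_eq_orthogonal_part[OF e, of d] by simp_all
  then have "norm (d - (d \<bullet> e) *\<^sub>R e) \<le> norm d" "\<bar>d \<bullet> e\<bar> \<le> norm d"
    by (auto intro: power2_le_imp_le simp: abs_le_square_iff)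
  ultimately show "norm (w - (w \<bullet> e) *\<^sub>R e) \<le> r" "\<bar>w \<bullet> e - t\<bar> \<le> r"
    by auto
qed

lemma cball_subset_axis_scale_cball:
  assumes "\<beta> \<ge> 1"
  shows "cball 0 1 \<subseteq> axis_scale e 1 \<beta> ` cball 0 1"
proof
  fix w :: 'a assume "w \<in> cball 0 1"
  then have "(norm w)\<^sup>2 \<le> 1"
    by (intro power_le_one) auto
  then have "(norm (w - (w \<bullet> e) *\<^sub>R e))\<^sup>2 + (w \<bullet> e)\<^sup>2 \<le> 1"
    using power2_norm_eq_orthogonal_part[OF e, of w] by simp
  moreover have "((w \<bullet> e) / \<beta>)\<^sup>2 \<le> (w \<bullet> e)\<^sup>2"
    using assms by (simp add: power_divide divide_le_eq mult_le_cancel_left1)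
  ultimately show "w \<in> axis_scale e 1 \<beta> ` cball 0 1"
    using assms by (simp add: mem_axis_scale_cball)
qed

lemma cball_beyond_unit_subset_axis_scale_cball:
  assumes "\<delta> > 0"
  shows "cball ((1 + \<delta>/2) *\<^sub>R e) (\<delta> / (4 * (1 + \<delta>))) \<subseteq> axis_scale e 1 (1 + \<delta>) ` cball 0 1"
proof
  define \<rho> where "\<rho> = \<delta> / (4 * (1 + \<delta>))"
  have \<rho>: "0 < \<rho>" "\<rho> \<le> \<delta>/4" "\<rho> < 1"
    using assms by (auto simp: \<rho>_def field_simps)
  fix w :: 'a assume "w \<in> cball ((1 + \<delta>/2) *\<^sub>R e) (\<delta> / (4 * (1 + \<delta>)))"
  from cball_on_axis_bounds[OF this, folded \<rho>_def]
  have perp: "norm (w - (w \<bullet> e) *\<^sub>R e) \<le> \<rho>" and along: "\<bar>w \<bullet> e - (1 + \<delta>/2)\<bar> \<le> \<rho>" .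
  have "(1 - \<rho>) * (1 + \<delta>) = 1 + 3/4 * \<delta>"
    using assms by (simp add: \<rho>_def field_simps)
  moreover have "0 \<le> w \<bullet> e" "w \<bullet> e \<le> 1 + 3/4 * \<delta>"
    using along \<rho> by (auto simp: abs_le_iff)
  ultimately have "0 \<le> (w \<bullet> e) / (1 + \<delta>)" "(w \<bullet> e) / (1 + \<delta>) \<le> 1 - \<rho>"
    using assms by (simp_all add: divide_le_eq)
  then have "((w \<bullet> e) / (1 + \<delta>))\<^sup>2 \<le> (1 - \<rho>)\<^sup>2"
    by (simp add: power_mono)
  moreover have "(norm (w - (w \<bullet> e) *\<^sub>R e))\<^sup>2 \<le> \<rho>\<^sup>2"
    using perp by (simp add: power_mono)
  moreover have "\<rho>\<^sup>2 + (1 - \<rho>)\<^sup>2 \<le> 1"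
    using \<rho> by (simp add: power2_eq_square algebra_simps mult_left_le)
  ultimately show "w \<in> axis_scale e 1 (1 + \<delta>) ` cball 0 1"
    using assms by (simp add: mem_axis_scale_cball)
qed

lemma cball_on_axis_subset_axis_scale_cball:
  assumes "4 \<le> R" "4 * real i \<le> R"
  shows "cball (real i *\<^sub>R e) (1/4) \<subseteq> axis_scale e (1/2) (R/2) ` cball 0 1"
proof
  fix w :: 'a assume "w \<in> cball (real i *\<^sub>R e) (1/4)"
  from cball_on_axis_bounds[OF this]
  have perp: "norm (w - (w \<bullet> e) *\<^sub>R e) \<le> 1/4" and along: "\<bar>w \<bullet> e - real i\<bar> \<le> 1/4" .
  have "(norm (w - (w \<bullet> e) *\<^sub>R e) / (1/2))\<^sup>2 \<le> (1/2)\<^sup>2"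
    using perp by (intro power_mono) auto
  moreover have "\<bar>w \<bullet> e\<bar> * 2 \<le> 5/8 * R"
    using along assms by linarith
  then have "\<bar>(w \<bullet> e) / (R/2)\<bar> \<le> 5/8"
    using assms(1) by (simp add: divide_le_eq)
  then have "((w \<bullet> e) / (R/2))\<^sup>2 \<le> (5/8)\<^sup>2"
    by (simp add: power2_le_iff_abs_le)
  ultimately show "w \<in> axis_scale e (1/2) (R/2) ` cball 0 1"
    using assms by (simp add: mem_axis_scale_cball power2_eq_square)
qed

lemma axis_stretch_subset_convex_hull:
  shows "(\<lambda>v. \<delta> *\<^sub>R e + axis_scale e 1 (1 + \<delta>) v) ` cball 0 1
           \<subseteq> convex hull (cball 0 1 \<union> cball ((2 * \<delta>) *\<^sub>R e) 1)"
proof clarify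
  fix v :: 'a assume v: "v \<in> cball 0 1"
  define s where "s = (1 + v \<bullet> e) / 2"
  have "\<bar>v \<bullet> e\<bar> \<le> 1"
    using Cauchy_Schwarz_ineq2[of v e] v e by simp
  then have s: "0 \<le> s" "s \<le> 1"
    by (auto simp: s_def)
  have "(1 - s) *\<^sub>R v + s *\<^sub>R (v + (2 * \<delta>) *\<^sub>R e) = v + (s * (2 * \<delta>)) *\<^sub>R e"
    by (simp add: algebra_simps)
  then have decomp: "\<delta> *\<^sub>R e + axis_scale e 1 (1 + \<delta>) v = (1 - s) *\<^sub>R v + s *\<^sub>R (v + (2 * \<delta>) *\<^sub>R e)"
    by (simp add: s_def axis_scale_def algebra_simps flip: scaleR_add_left)
  have "v \<in> convex hull (cball 0 1 \<union> cball ((2 * \<delta>) *\<^sub>R e) 1)"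
    using v by (simp add: hull_inc)
  moreover have "v + (2 * \<delta>) *\<^sub>R e \<in> convex hull (cball 0 1 \<union> cball ((2 * \<delta>) *\<^sub>R e) 1)"
    using v by (simp add: hull_inc dist_norm)
  ultimately show "\<delta> *\<^sub>R e + axis_scale e 1 (1 + \<delta>) v \<in> convex hull (cball 0 1 \<union> cball ((2 * \<delta>) *\<^sub>R e) 1)"
    unfolding decomp by (rule convexD_alt[OF convex_convex_hull]) (use s in auto)
qed

lemma axis_scale_half_subset_convex_hull:
  shows "axis_scale e (1/2) (R/2) ` cball 0 1 \<subseteq> convex hull (cball 0 1 \<union> {R *\<^sub>R e, - (R *\<^sub>R e)})"
proof clarify
  fix v :: 'a assume v: "v \<in> cball 0 1"
  define a where "a = v \<bullet> e"
  define l where "l = \<bar>a\<bar> / 2"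
  have "norm (v - a *\<^sub>R e) \<le> 1" "\<bar>a\<bar> \<le> 1"
    using cball_on_axis_bounds[of v 0 1] v by (simp_all add: a_def)
  then have l: "0 \<le> l" "l \<le> 1/2"
    by (auto simp: l_def)
  define u where "u = (1 / (2 * (1 - l))) *\<^sub>R (v - a *\<^sub>R e)"
  have "norm u = norm (v - a *\<^sub>R e) / (2 * (1 - l))"
    unfolding u_def norm_scaleR using l by simp
  also have "\<dots> \<le> 1"
    using l \<open>norm (v - a *\<^sub>R e) \<le> 1\<close> by (simp add: divide_le_eq)
  finally have "norm u \<le> 1" .
  define \<sigma> where "\<sigma> = (if a \<ge> 0 then R *\<^sub>R e else - (R *\<^sub>R e))"
  have "(1 - l) *\<^sub>R u = (1/2) *\<^sub>R (v - a *\<^sub>R e)"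
    using l by (simp add: u_def)
  moreover have "l *\<^sub>R \<sigma> = (R * a / 2) *\<^sub>R e"
    by (simp add: \<sigma>_def l_def abs_if)
  ultimately have decomp: "axis_scale e (1/2) (R/2) v = (1 - l) *\<^sub>R u + l *\<^sub>R \<sigma>"
    by (simp add: axis_scale_def a_def)
  have "u \<in> convex hull (cball 0 1 \<union> {R *\<^sub>R e, - (R *\<^sub>R e)})"
    using \<open>norm u \<le> 1\<close> by (simp add: hull_inc)
  moreover have "\<sigma> \<in> convex hull (cball 0 1 \<union> {R *\<^sub>R e, - (R *\<^sub>R e)})"
    by (simp add: \<sigma>_def hull_inc)
  ultimately show "axis_scale e (1/2) (R/2) v \<in> convex hull (cball 0 1 \<union> {R *\<^sub>R e, - (R *\<^sub>R e)})"
    unfolding decomp by (rule convexD_alt[OF convex_convex_hull]) (use l in auto)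
qed

end

lemma cball_eq_affine_image_unit_cball:
  fixes z :: "'a::real_normed_vector"
  assumes "\<rho> > 0"
  shows "cball z \<rho> = (\<lambda>u. z + \<rho> *\<^sub>R u) ` cball 0 1"
proof -
  have "(\<lambda>u. z + \<rho> *\<^sub>R u) ` cball 0 1 = (+) z ` (\<lambda>u. \<rho> *\<^sub>R u) ` cball 0 1"
    by (simp add: image_image)
  also have "\<dots> = cball z \<rho>"
    using assms by (simp add: cball_scale)
  finally show ?thesis by simp
qed

lemma measure_affine_image_cball:
  fixes f :: "'a::euclidean_space \<Rightarrow> 'a"
  assumes "linear f" "\<rho> > 0"
  shows "measure lebesgue ((\<lambda>v. c + f v) ` cball z \<rho>) = \<rho> ^ DIM('a) * measure lebesgue (f ` cball 0 1)"
proof -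
  have "(\<lambda>v. c + f v) ` cball z \<rho> = (\<lambda>x. \<rho> *\<^sub>R x + (c + f z)) ` f ` cball 0 1"
    unfolding cball_eq_affine_image_unit_cball[OF assms(2)] image_image
    using assms(1) by (simp add: linear_add linear_scale algebra_simps)
  then show ?thesis
    using assms(2) by (simp add: measure_lebesgue_affine)
qed

lemma measure_linear_image_cball_pos:
  fixes f :: "'a::euclidean_space \<Rightarrow> 'a"
  assumes "linear f" "inj f"
  shows "measure lebesgue (f ` cball 0 1) > 0"
proof -
  have "open (f ` ball 0 1)"
    using assms by (intro open_surjective_linear_image) (auto simp: linear_injective_imp_surjective)
  moreover have "0 \<in> f ` ball 0 1"
    using assms(1) linear_0 by force
  ultimately obtain s where s: "s > 0" "ball 0 s \<subseteq> f ` ball 0 1"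
    using open_contains_ball by blast
  have "compact (f ` cball 0 1)"
    using assms(1) by (intro compact_continuous_image linear_continuous_on) (auto simp: linear_linear)
  moreover have "ball 0 s \<subseteq> f ` cball 0 1"
    using s(2) ball_subset_cball[of 0 1] by blast
  ultimately have "measure lebesgue (ball (0::'a) s) \<le> measure lebesgue (f ` cball 0 1)"
    by (meson measure_mono_fmeasurable lmeasurable_compact lmeasurable_ball fmeasurableD)
  moreover have "measure lebesgue (ball (0::'a) s) > 0"
    using s(1) by (simp add: content_ball_pos)
  ultimately show ?thesis by linarith
qed

text \<open>Volumes of two ellipsoids sharing the linear part f are compared by packing disjoint balls
  into the preimage, since each ball contributes rho^N times the volume of f(B); this avoids
  determinants of linear maps on a general euclidean space.\<close>

lemma measure_affine_image_ge_packing: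
  fixes f :: "'a::euclidean_space \<Rightarrow> 'a"
  assumes f: "linear f" "inj f"
    and I: "finite I" "pairwise (\<lambda>i j. disjnt (cball (z i) (\<rho> i)) (cball (z j) (\<rho> j))) I"
      "\<And>i. i \<in> I \<Longrightarrow> \<rho> i > 0"
    and S: "compact S" "(\<Union>i\<in>I. cball (z i) (\<rho> i)) \<subseteq> S"
  shows "(\<Sum>i\<in>I. \<rho> i ^ DIM('a)) * measure lebesgue (f ` cball 0 1) \<le> measure lebesgue ((\<lambda>v. c + f v) ` S)"
proof -
  define T where "T = (\<lambda>v. c + f v)"
  have "inj T"
    using f(2) by (simp add: T_def inj_def)
  have compact_T: "compact (T ` K)" if "compact K" for K
    unfolding T_def using f(1) that
    by (intro compact_continuous_image continuous_intros linear_continuous_on) (auto simp: linear_linear)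
  have balls_measurable: "T ` cball (z i) (\<rho> i) \<in> lmeasurable" for i
    by (simp add: compact_T lmeasurable_compact)
  have "(\<Sum>i\<in>I. \<rho> i ^ DIM('a)) * measure lebesgue (f ` cball 0 1)
        = (\<Sum>i\<in>I. measure lebesgue (T ` cball (z i) (\<rho> i)))"
    unfolding sum_distrib_right T_def using I(3) f(1) by (simp add: measure_affine_image_cball)
  also have "\<dots> = measure lebesgue (\<Union>i\<in>I. T ` cball (z i) (\<rho> i))"
    using I(1,2) \<open>inj T\<close> balls_measurable
    by (intro measure_UNION'[symmetric]) (auto simp: pairwise_def disjnt_def simp flip: image_Int)
  also have "\<dots> \<le> measure lebesgue (T ` S)"
    using S I(1) compact_T balls_measurable
    by (intro measure_mono_fmeasurable lmeasurable_compact sets.finite_UN fmeasurableD) auto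
  finally show ?thesis unfolding T_def .
qed

lemma max_vol_ellipsoid_packing:
  fixes f g :: "'a::euclidean_space \<Rightarrow> 'a"
  assumes mx: "max_vol_ellipsoid_in ((\<lambda>v. c + f v) ` cball 0 1) M"
    and f: "linear f" "inj f" and g: "linear g" "inj g"
    and sub: "(\<lambda>v. c' + f (g v)) ` cball 0 1 \<subseteq> M"
    and I: "finite I" "pairwise (\<lambda>i j. disjnt (cball (z i) (\<rho> i)) (cball (z j) (\<rho> j))) I"
      "\<And>i. i \<in> I \<Longrightarrow> \<rho> i > 0"
    and packing: "(\<Union>i\<in>I. cball (z i) (\<rho> i)) \<subseteq> g ` cball 0 1"
  shows "(\<Sum>i\<in>I. \<rho> i ^ DIM('a)) \<le> 1"
proof -
  have "is_ellipsoid ((\<lambda>v. c' + f (g v)) ` cball 0 1)"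
    unfolding is_ellipsoid_def using f g
    by (intro exI[of _ c'] exI[of _ "f \<circ> g"]) (auto simp: linear_compose inj_compose)
  then have "measure lebesgue ((\<lambda>v. c' + f v) ` g ` cball 0 1) \<le> measure lebesgue ((\<lambda>v. c + f v) ` cball 0 1)"
    using mx sub unfolding max_vol_ellipsoid_in_def by (simp add: image_image)
  also have "\<dots> = measure lebesgue (f ` cball 0 1)"
    using measure_affine_image_cball[OF f(1), of 1 c 0] by simp
  moreover have "compact (g ` cball 0 1)"
    using g(1) by (intro compact_continuous_image linear_continuous_on) (auto simp: linear_linear)
  ultimately have "(\<Sum>i\<in>I. \<rho> i ^ DIM('a)) * measure lebesgue (f ` cball 0 1) \<le> 1 * measure lebesgue (f ` cball 0 1)"
    using measure_affine_image_ge_packing[OF f I, of "g ` cball 0 1" c'] packing by simp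
  then show ?thesis
    using measure_linear_image_cball_pos[OF f] by simp
qed

lemma affine_image_convex_hull_subset:
  fixes f :: "'a::real_vector \<Rightarrow> 'b::real_vector"
  assumes "linear f" "convex M" "(\<lambda>v. c + f v) ` S \<subseteq> M"
  shows "(\<lambda>v. c + f v) ` (convex hull S) \<subseteq> M"
proof -
  have "(\<lambda>v. c + f v) ` (convex hull S) = (\<lambda>x. c + x) ` f ` (convex hull S)"
    by (simp add: image_image)
  also have "\<dots> = convex hull ((\<lambda>x. c + x) ` f ` S)"
    by (simp only: convex_hull_linear_image[OF assms(1)] convex_hull_translation)
  also have "\<dots> = convex hull ((\<lambda>v. c + f v) ` S)"
    by (simp add: image_image)
  also have "\<dots> \<subseteq> M"
    using assms(2,3) by (rule hull_minimal[rotated])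
  finally show ?thesis .
qed

text \<open>The stretched ball holds the unit ball and one further disjoint ball beyond it.\<close>

lemma max_vol_ellipsoid_not_axis_stretch:
  fixes f :: "'a::euclidean_space \<Rightarrow> 'a"
  assumes mx: "max_vol_ellipsoid_in ((\<lambda>v. c + f v) ` cball 0 1) M" and f: "linear f" "inj f"
    and e: "norm e = 1" and "\<delta> > 0"
  shows "\<not> (\<lambda>v. c' + f (axis_scale e 1 (1 + \<delta>) v)) ` cball 0 1 \<subseteq> M"
proof
  assume stretched_sub: "(\<lambda>v. c' + f (axis_scale e 1 (1 + \<delta>) v)) ` cball 0 1 \<subseteq> M"
  define z where "z = (\<lambda>b. if b then (1 + \<delta>/2) *\<^sub>R e else 0)"
  define \<rho> where "\<rho> = (\<lambda>b. if b then \<delta> / (4 * (1 + \<delta>)) else 1)"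
  have \<rho>_pos: "\<rho> b > 0" for b
    using \<open>\<delta> > 0\<close> by (simp add: \<rho>_def)
  have "\<rho> True < \<delta> / 2"
    using \<open>\<delta> > 0\<close> by (simp add: \<rho>_def field_simps add_pos_pos)
  then have "disjnt (cball (z False) (\<rho> False)) (cball (z True) (\<rho> True))"
    using e \<open>\<delta> > 0\<close> by (intro disjnt_def[THEN iffD2] disjoint_cballI) (simp add: z_def \<rho>_def)
  then have "pairwise (\<lambda>i j. disjnt (cball (z i) (\<rho> i)) (cball (z j) (\<rho> j))) UNIV"
    by (auto simp: pairwise_def disjnt_sym UNIV_bool)
  moreover have "(\<Union>i. cball (z i) (\<rho> i)) \<subseteq> axis_scale e 1 (1 + \<delta>) ` cball 0 1"
    using cball_subset_axis_scale_cball[OF e, of "1 + \<delta>"]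
      cball_beyond_unit_subset_axis_scale_cball[OF e \<open>\<delta> > 0\<close>] \<open>\<delta> > 0\<close>
    by (auto simp: z_def \<rho>_def UNIV_bool)
  ultimately have "(\<Sum>i\<in>UNIV. \<rho> i ^ DIM('a)) \<le> 1"
    using \<open>\<delta> > 0\<close> e \<rho>_pos
    by (intro max_vol_ellipsoid_packing[OF mx f linear_axis_scale inj_axis_scale stretched_sub]) auto
  moreover have "\<rho> False = 1"
    by (simp add: \<rho>_def)
  ultimately show False
    using zero_less_power[OF \<rho>_pos[of True], of "DIM('a)"] by (simp add: UNIV_bool)
qed

text \<open>The squeezed ball holds 4^N + 1 disjoint balls of radius 1/4 centred on the axis.\<close>

lemma max_vol_ellipsoid_not_long_axis:
  fixes f :: "'a::euclidean_space \<Rightarrow> 'a"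
  assumes mx: "max_vol_ellipsoid_in ((\<lambda>v. c + f v) ` cball 0 1) M" and f: "linear f" "inj f"
    and e: "norm e = 1" and R: "4 ^ (DIM('a) + 1) \<le> R"
  shows "\<not> (\<lambda>v. c' + f (axis_scale e (1/2) (R/2) v)) ` cball 0 1 \<subseteq> M"
proof
  assume squeezed_sub: "(\<lambda>v. c' + f (axis_scale e (1/2) (R/2) v)) ` cball 0 1 \<subseteq> M"
  define N where "N = DIM('a)"
  have "(4::real) \<le> 4 ^ (DIM('a) + 1)"
    using power_increasing[of 1 "DIM('a) + 1" "4::real"] by simp
  with R have "4 \<le> R"
    by linarith
  have "pairwise (\<lambda>i j. disjnt (cball (real i *\<^sub>R e) (1/4)) (cball (real j *\<^sub>R e) (1/4))) {..4 ^ N}"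
  proof (rule pairwiseI)
    fix i j :: nat assume "i \<noteq> j"
    then have "dist (real i *\<^sub>R e) (real j *\<^sub>R e) \<ge> 1"
      using e by (simp add: dist_norm flip: scaleR_diff_left)
    then show "disjnt (cball (real i *\<^sub>R e) (1/4)) (cball (real j *\<^sub>R e) (1/4))"
      by (simp add: disjnt_def disjoint_cballI)
  qed
  moreover have "(\<Union>i\<in>{..4 ^ N}. cball (real i *\<^sub>R e) (1/4)) \<subseteq> axis_scale e (1/2) (R/2) ` cball 0 1"
  proof (intro UN_least cball_on_axis_subset_axis_scale_cball[OF e \<open>4 \<le> R\<close>])
    fix i :: nat assume "i \<in> {..4 ^ N}"
    then have "real i \<le> 4 ^ N"
      using of_nat_le_iff[of i "4 ^ N", where 'a=real] by simp
    then have "4 * real i \<le> 4 ^ (N + 1)"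
      by simp
    then show "4 * real i \<le> R"
      using R unfolding N_def by linarith
  qed
  ultimately have "(\<Sum>i\<in>{..(4::nat) ^ N}. (1/4 :: real) ^ N) \<le> 1"
    using e \<open>4 \<le> R\<close> unfolding N_def
    by (intro max_vol_ellipsoid_packing[OF mx f linear_axis_scale inj_axis_scale squeezed_sub]) auto
  then show False
    by (simp add: field_simps)
qed

text \<open>If c were not p, the hull of E and of its reflection 2p - E would contain E stretched along
  the direction of p - c.\<close>

lemma max_vol_ellipsoid_center:
  fixes f :: "'a::euclidean_space \<Rightarrow> 'a"
  assumes M: "convex M" "\<And>x. x \<in> M \<Longrightarrow> 2 *\<^sub>R p - x \<in> M"
    and mx: "max_vol_ellipsoid_in ((\<lambda>v. c + f v) ` cball 0 1) M" and f: "linear f" "inj f"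
  shows "c = p"
proof (rule ccontr)
  assume "c \<noteq> p"
  obtain q where q: "f q = p - c"
    using f by (metis linear_injective_imp_surjective surjD)
  then have p_eq: "p = c + f q"
    by simp
  define \<delta> where "\<delta> = norm q"
  define e where "e = (1 / \<delta>) *\<^sub>R q"
  have "\<delta> > 0"
    using q \<open>c \<noteq> p\<close> f(1) linear_0 by (force simp: \<delta>_def)
  then have e: "norm e = 1" and q_eq: "q = \<delta> *\<^sub>R e"
    by (simp_all add: e_def \<delta>_def)
  have E_sub: "(\<lambda>v. c + f v) ` cball 0 1 \<subseteq> M"
    using mx by (simp add: max_vol_ellipsoid_in_def)
  have "(\<lambda>v. c + f v) ` cball ((2 * \<delta>) *\<^sub>R e) 1 \<subseteq> M"
  proof clarify
    fix u assume "u \<in> cball ((2 * \<delta>) *\<^sub>R e) 1"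
    then have "2 *\<^sub>R q - u \<in> cball 0 1"
      by (simp add: q_eq dist_norm norm_minus_commute)
    then have "c + f (2 *\<^sub>R q - u) \<in> M"
      using E_sub by blast
    moreover have "2 *\<^sub>R p - (c + f (2 *\<^sub>R q - u)) = c + f u"
      using f(1) unfolding p_eq by (simp add: linear_add linear_diff linear_scale algebra_simps scaleR_2)
    ultimately show "c + f u \<in> M"
      using M(2) by metis
  qed
  with E_sub have "(\<lambda>v. c + f v) ` (\<lambda>v. \<delta> *\<^sub>R e + axis_scale e 1 (1 + \<delta>) v) ` cball 0 1 \<subseteq> M"
    using affine_image_convex_hull_subset[OF f(1) M(1)] axis_stretch_subset_convex_hull[OF e]
    by (metis (no_types, lifting) image_Un image_mono le_sup_iff order_trans)
  then have "(\<lambda>v. (c + f (\<delta> *\<^sub>R e)) + f (axis_scale e 1 (1 + \<delta>) v)) ` cball 0 1 \<subseteq> M"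
    using f(1) by (simp add: image_image linear_add add.assoc)
  with max_vol_ellipsoid_not_axis_stretch[OF mx f e \<open>\<delta> > 0\<close>] show False
    by blast
qed

text \<open>Otherwise the hull of E and p +- f x contains E squeezed to half across x and stretched to
  norm x / 2 along x.\<close>

lemma max_vol_ellipsoid_norm_bound:
  fixes f :: "'a::euclidean_space \<Rightarrow> 'a"
  assumes M: "convex M" and mx: "max_vol_ellipsoid_in ((\<lambda>v. p + f v) ` cball 0 1) M"
    and f: "linear f" "inj f" and x: "p + f x \<in> M" "p - f x \<in> M"
  shows "norm x < 4 ^ (DIM('a) + 1)"
proof (rule ccontr)
  define R where "R = norm x"
  define e where "e = (1 / R) *\<^sub>R x"
  assume "\<not> norm x < 4 ^ (DIM('a) + 1)"
  then have R: "4 ^ (DIM('a) + 1) \<le> R"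
    by (simp add: R_def)
  moreover have "(0::real) < 4 ^ (DIM('a) + 1)"
    by simp
  ultimately have "x \<noteq> 0"
    unfolding R_def by (metis norm_zero not_le)
  then have e: "norm e = 1" and x_eq: "R *\<^sub>R e = x"
    by (simp_all add: e_def R_def)
  have "(\<lambda>v. p + f v) ` cball 0 1 \<subseteq> M"
    using mx by (simp add: max_vol_ellipsoid_in_def)
  moreover have "p + f (R *\<^sub>R e) \<in> M" "p + f (- (R *\<^sub>R e)) \<in> M"
    using x f(1) by (simp_all add: x_eq linear_neg)
  ultimately have "(\<lambda>v. p + f v) ` (cball 0 1 \<union> {R *\<^sub>R e, - (R *\<^sub>R e)}) \<subseteq> M"
    by blast
  then have "(\<lambda>v. p + f v) ` axis_scale e (1/2) (R/2) ` cball 0 1 \<subseteq> M"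
    using affine_image_convex_hull_subset[OF f(1) M] axis_scale_half_subset_convex_hull[OF e]
    by (meson image_mono order_trans)
  with max_vol_ellipsoid_not_long_axis[OF mx f e R] show False
    by (simp add: image_image)
qed

lemma ball_subset_max_vol_ellipsoid:
  fixes p :: "'a::euclidean_space"
  assumes M: "convex M" "\<And>x. x \<in> M \<Longrightarrow> 2 *\<^sub>R p - x \<in> M" "cball p r \<subseteq> M"
    and mx: "max_vol_ellipsoid_in E M"
  shows "ball p (r / 4 ^ (DIM('a) + 1)) \<subseteq> E"
proof
  define \<kappa> :: real where "\<kappa> = 4 ^ (DIM('a) + 1)"
  have "\<kappa> > 0"
    by (simp add: \<kappa>_def)
  from mx have "is_ellipsoid E"
    by (simp add: max_vol_ellipsoid_in_def)
  then obtain c and f :: "'a \<Rightarrow> 'a" where f: "linear f" "inj f" and E: "E = (\<lambda>v. c + f v) ` cball 0 1"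
    unfolding is_ellipsoid_def by blast
  have "c = p"
    using max_vol_ellipsoid_center[OF M(1,2) mx[unfolded E] f] by simp
  fix y assume "y \<in> ball p (r / 4 ^ (DIM('a) + 1))"
  then have "\<kappa> * dist p y < r"
    using \<open>\<kappa> > 0\<close> by (simp add: \<kappa>_def field_simps)
  moreover have "dist p (p + \<kappa> *\<^sub>R (y - p)) = \<kappa> * dist p y"
    using \<open>\<kappa> > 0\<close> by (simp add: dist_norm norm_minus_commute)
  ultimately have "p + \<kappa> *\<^sub>R (y - p) \<in> cball p r"
    by simp
  moreover obtain x where x: "f x = \<kappa> *\<^sub>R (y - p)"
    using f by (metis linear_injective_imp_surjective surjD)
  ultimately have "p + f x \<in> M"
    using M(3) by auto
  moreover have "2 *\<^sub>R p - (p + f x) = p - f x"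
    by (simp add: scaleR_2 algebra_simps)
  ultimately have "p + f x \<in> M" "p - f x \<in> M"
    using M(2) by metis+
  then have "norm x < \<kappa>"
    unfolding \<kappa>_def by (rule max_vol_ellipsoid_norm_bound[OF M(1) mx[unfolded E \<open>c = p\<close>] f])
  moreover have "y = p + f ((1 / \<kappa>) *\<^sub>R x)"
    using \<open>\<kappa> > 0\<close> f(1) x by (simp add: linear_scale)
  ultimately show "y \<in> E"
    unfolding E \<open>c = p\<close> using \<open>\<kappa> > 0\<close> by (intro image_eqI) auto
qed

lemma convex_macbeath_region:
  assumes "convex K"
  shows "convex (macbeath_region lam K p)"
proof -
  have "{v. p + v \<in> K} = (\<lambda>k. k - p) ` K" "{v. p - v \<in> K} = (\<lambda>k. p + (-1) *\<^sub>R k) ` K"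
    by (force simp: image_iff algebra_simps)+
  then have "convex ({v. p + v \<in> K} \<inter> {v. p - v \<in> K})"
    using convex_Int[OF convex_translation_subtract[OF assms] convex_affinity[OF assms]] by metis
  then show ?thesis
    unfolding macbeath_region_def by (rule convex_affinity)
qed

lemma macbeath_region_reflect:
  assumes "x \<in> macbeath_region lam K p"
  shows "2 *\<^sub>R p - x \<in> macbeath_region lam K p"
proof -
  obtain v where v: "p + v \<in> K" "p - v \<in> K" and x: "x = p + lam *\<^sub>R v"
    using assms by (auto simp: macbeath_region_def)
  have "2 *\<^sub>R p - x = p + lam *\<^sub>R (- v)"
    unfolding x by (simp add: scaleR_2 algebra_simps)
  then show ?thesis
    unfolding macbeath_region_def using v by (intro image_eqI[where x = "- v"]) auto
qed

lemma cball_subset_macbeath_region: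
  assumes "lam > 0" "cball p r \<subseteq> K"
  shows "cball p (lam * r) \<subseteq> macbeath_region lam K p"
proof
  fix x assume "x \<in> cball p (lam * r)"
  define v where "v = (1 / lam) *\<^sub>R (x - p)"
  have "norm v = dist p x / lam"
    using assms(1) unfolding v_def norm_scaleR by (simp add: dist_norm norm_minus_commute)
  then have "norm v \<le> r"
    using \<open>x \<in> cball p (lam * r)\<close> assms(1) by (simp add: divide_le_eq mult.commute)
  then have "p + v \<in> K" "p - v \<in> K"
    using assms(2) by (auto simp: dist_norm)
  moreover have "x = p + lam *\<^sub>R v"
    using assms(1) by (simp add: v_def)
  ultimately show "x \<in> macbeath_region lam K p"
    unfolding macbeath_region_def by (intro image_eqI) auto
qed

lemma ball_subset_macbeath_ellipsoid:
  fixes K :: "'a::euclidean_space set"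
  assumes "convex K" "lam > 0" "cball p r \<subseteq> K" "is_macbeath_ellipsoid lam K p E"
  shows "ball p (lam * r / 4 ^ (DIM('a) + 1)) \<subseteq> E"
  using ball_subset_max_vol_ellipsoid[OF convex_macbeath_region[OF assms(1)] macbeath_region_reflect
      cball_subset_macbeath_region[OF assms(2,3)]] assms(4)
  by (simp add: is_macbeath_ellipsoid_def)

lemma convex_lifted_polytope:
  fixes a :: "nat \<Rightarrow> 'a::real_inner"
  shows "convex {(x, z). \<forall>j<n. z \<le> b j - a j \<bullet> x + \<epsilon>}"
proof -
  have "{(x, z). \<forall>j<n. z \<le> b j - a j \<bullet> x + \<epsilon>} = (\<Inter>j<n. {w. (a j, 1) \<bullet> w \<le> b j + \<epsilon>})"
    by (auto simp: algebra_simps)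
  then show ?thesis
    by (simp add: convex_INT convex_halfspace_le)
qed

lemma cball_subset_lifted_polytope:
  fixes a :: "nat \<Rightarrow> 'a::real_inner"
  assumes "\<forall>j<n. norm (a j) \<le> 1" and "p \<in> {(x, z). \<forall>j<n. z \<le> b j - a j \<bullet> x}"
  shows "cball p (\<epsilon> / 2) \<subseteq> {(x, z). \<forall>j<n. z \<le> b j - a j \<bullet> x + \<epsilon>}"
proof clarify
  fix x z j assume "(x, z) \<in> cball p (\<epsilon> / 2)" "j < n"
  obtain x0 z0 where p: "p = (x0, z0)"
    by fastforce
  have "norm (x0 - x) \<le> \<epsilon> / 2" "\<bar>z0 - z\<bar> \<le> \<epsilon> / 2"
    using \<open>(x, z) \<in> cball p (\<epsilon> / 2)\<close> norm_fst_le[of "x0 - x" "z0 - z"] norm_snd_le[of "z0 - z" "x0 - x"]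
    by (auto simp: p dist_norm)
  then have "\<bar>a j \<bullet> (x0 - x)\<bar> \<le> \<epsilon> / 2"
    using Cauchy_Schwarz_ineq2[of "a j" "x0 - x"] assms(1) \<open>j < n\<close>
    by (smt (verit) mult_left_le_one_le norm_ge_zero)
  moreover have "z0 \<le> b j - a j \<bullet> x0"
    using assms(2) \<open>j < n\<close> by (simp add: p)
  ultimately show "z \<le> b j - a j \<bullet> x + \<epsilon>"
    using \<open>\<bar>z0 - z\<bar> \<le> \<epsilon> / 2\<close> unfolding inner_diff_right abs_le_iff by linarith
qed

theorem lemma8:
  fixes lam_c :: real
  assumes "0 < lam_c" and "lam_c < 1"
  shows "\<exists>c>0. \<forall>(n::nat) (a :: nat \<Rightarrow> real^'d) (b :: nat \<Rightarrow> real) (\<epsilon>::real).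
           (\<forall>j<n. norm (a j) = 1 \<and> b j > 0) \<longrightarrow>
           bounded {x. \<forall>j<n. a j \<bullet> x \<le> b j} \<longrightarrow>
           diameter {x. \<forall>j<n. a j \<bullet> x \<le> b j} = 1 \<longrightarrow>
           0 \<in> interior {x. \<forall>j<n. a j \<bullet> x \<le> b j} \<longrightarrow>
           \<epsilon> > 0 \<longrightarrow>
           (\<forall>p \<in> {(x, z). z \<ge> 0 \<and> (\<forall>j<n. z \<le> b j - a j \<bullet> x)}.
              \<forall>E. is_macbeath_ellipsoid lam_c
                     {(x, z). \<forall>j<n. z \<le> b j - a j \<bullet> x + \<epsilon>} p E
                   \<longrightarrow> ball p (c * \<epsilon>) \<subseteq> E)"
proof -
  \<comment> \<open>Only norm (a j) \<le> 1 is used.\<close>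
  define c where "c = lam_c / (2 * 4 ^ (DIM((real^'d) \<times> real) + 1))"
  have "ball p (c * \<epsilon>) \<subseteq> E"
    if "\<forall>j<n. norm (a j) = 1" "p \<in> {(x, z). \<forall>j<n. z \<le> b j - a j \<bullet> x}"
      and "is_macbeath_ellipsoid lam_c {(x, z). \<forall>j<n. z \<le> b j - a j \<bullet> x + \<epsilon>} p E"
    for n and a :: "nat \<Rightarrow> real^'d" and b \<epsilon> p E
  proof -
    have "cball p (\<epsilon> / 2) \<subseteq> {(x, z). \<forall>j<n. z \<le> b j - a j \<bullet> x + \<epsilon>}"
      using that(1,2) by (intro cball_subset_lifted_polytope) auto
    from ball_subset_macbeath_ellipsoid[OF convex_lifted_polytope assms(1) this that(3)]
    show ?thesis
      by (simp add: c_def field_simps)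
  qed
  moreover have "c > 0"
    using assms(1) by (simp add: c_def)
  ultimately show ?thesis
    by blast
qed

end
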